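(* Let $f_1^0, f_2^0, g_1^0, x^0\in\mathbb{R}$ with $\Delta := f_1^0-f_2^0>0$ and let $N\ge1$ be an integer. Let $\mu_1,\mu_2\ge0$ and $\max\{\mu_1,\mu_2\}<L_1<L_2<\infty$. Let $p_2 := L_1^{-1}\big(1+\frac{L_1^{-1}-L_2^{-1}}{\mu_2^{-1}-L_2^{-1}}\big)+L_1^{-1}\frac{L_1-\mu_2}{L_2-\mu_2}$ (with $1/0$ interpreted as $\infty$ when $\mu_2=0$) and $U:=-\sqrt{\frac{2\Delta}{p_2N}}$. Define $f_1(x)=\frac12L_1(x-x^0)^2+g_1^0(x-x^0)+f_1^0$ and, for $k=0,\dots,N$: $x^k=x^0-k\frac{U}{L_1}$, $g_2^k=g_1^0-(k+1)U$, $f_2^k=f_1(x^k)-\frac{N-k}{N}\Delta$, and for $k=0,\dots,N-1$: $\bar x^k=x^k-\frac{L_2-L_1}{L_2-\mu_2}\frac{U}{L_1}$. Define $f_2:\mathbb{R}\to\mathbb{R}$ by $f_2(x)=\frac12\mu_2(x-x^0)^2+g_2^0(x-x^0)+f_2^0$ for $x\le x^0$; $f_2(x)=\frac12\mu_2(x-x^k)^2+g_2^k(x-x^k)+f_2^k$ for $x\in[x^k,\bar x^k]$; $f_2(x)=\frac12L_2(x-x^{k+1})^2+g_2^{k+1}(x-x^{k+1})+f_2^{k+1}$ for $x\in[\bar x^k,x^{k+1}]$ ($k=0,\dots,N-1$); $f_2(x)=\frac12\mu_2(x-x^N)^2+g_2^N(x-x^N)+f_2^N$ for $x\ge x^N$.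 Then $f_1\in\mathcal{F}_{\mu_1,L_1}$, $f_2\in\mathcal{F}_{\mu_2,L_2}$, and performing $N$ iterations of DCA on $F=f_1-f_2$ starting from $x^0$ yields $$\tfrac12\min_{0\le k\le N}|\nabla f_1(x^k)-\nabla f_2(x^k)|^2=\frac{\Delta}{p_2N}.$$
   Context: For $\mu\in\mathbb{R}$ and $L\in(\mu,\infty]$, $\mathcal{F}_{\mu,L}$ is the class of proper lower semicontinuous functions $f$ with $f-\frac{\mu}{2}|\cdot|^2$ convex and $\frac{L}{2}|\cdot|^2-f$ convex (when $L<\infty$). A DCA iteration from $x$ on $F=f_1-f_2$ selects $g_2\in\partial f_2(x)$ and $x^+\in\operatorname{argmin}_w\{f_1(w)-g_2w\}$, i.e. (for differentiable $f_1$) $\nabla f_1(x^+)=g_2$. *)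

theory Defs
  imports "HOL-Analysis.Analysis"
begin

definition lsc :: "(real \<Rightarrow> real) \<Rightarrow> bool" where
  "lsc f \<longleftrightarrow> (\<forall>x c. c < f x \<longrightarrow> (\<forall>\<^sub>F y in at x. c < f y))"

text \<open>The class F_{mu,L} for finite L (real-valued, hence proper, functions on R).\<close>
definition F_class :: "real \<Rightarrow> real \<Rightarrow> (real \<Rightarrow> real) \<Rightarrow> bool" where
  "F_class \<mu> L f \<longleftrightarrow> lsc f
     \<and> convex_on UNIV (\<lambda>x. f x - \<mu> / 2 * x\<^sup>2)
     \<and> convex_on UNIV (\<lambda>x. L / 2 * x\<^sup>2 - f x)"

definition subdiff :: "(real \<Rightarrow> real) \<Rightarrow> real \<Rightarrow> real set" where
  "subdiff f x = {g. \<forall>w. f x + g * (w - x) \<le> f w}"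

definition dca_step :: "(real \<Rightarrow> real) \<Rightarrow> (real \<Rightarrow> real) \<Rightarrow> real \<Rightarrow> real \<Rightarrow> bool" where
  "dca_step f1 f2 x x' \<longleftrightarrow>
     (\<exists>g \<in> subdiff f2 x. \<forall>w. f1 x' - g * x' \<le> f1 w - g * w)"

definition dca_run :: "(real \<Rightarrow> real) \<Rightarrow> (real \<Rightarrow> real) \<Rightarrow> real \<Rightarrow> nat \<Rightarrow> (nat \<Rightarrow> real) \<Rightarrow> bool" where
  "dca_run f1 f2 x0 N y \<longleftrightarrow> y 0 = x0 \<and> (\<forall>k<N. dca_step f1 f2 (y k) (y (Suc k)))"

text \<open>The constant p_2 (with 1/mu2 read as infinity when mu2 = 0).\<close>
definition p2_const :: "real \<Rightarrow> real \<Rightarrow> real \<Rightarrow> real" where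
  "p2_const \<mu>2 L1 L2 =
     (1 / L1) * (1 + (if \<mu>2 = 0 then 0 else (1 / L1 - 1 / L2) / (1 / \<mu>2 - 1 / L2)))
     + (1 / L1) * ((L1 - \<mu>2) / (L2 - \<mu>2))"

definition U_const :: "real \<Rightarrow> real \<Rightarrow> real \<Rightarrow> real \<Rightarrow> nat \<Rightarrow> real" where
  "U_const \<Delta> \<mu>2 L1 L2 N = - sqrt (2 * \<Delta> / (p2_const \<mu>2 L1 L2 * real N))"

definition hard_f1 :: "real \<Rightarrow> real \<Rightarrow> real \<Rightarrow> real \<Rightarrow> real \<Rightarrow> real" where
  "hard_f1 L1 g10 f10 x0 x = 1/2 * L1 * (x - x0)\<^sup>2 + g10 * (x - x0) + f10"

definition xk :: "real \<Rightarrow> real \<Rightarrow> real \<Rightarrow> nat \<Rightarrow> real" where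
  "xk x0 U L1 k = x0 - real k * U / L1"

definition g2k :: "real \<Rightarrow> real \<Rightarrow> nat \<Rightarrow> real" where
  "g2k g10 U k = g10 - (real k + 1) * U"

definition xbk :: "real \<Rightarrow> real \<Rightarrow> real \<Rightarrow> real \<Rightarrow> real \<Rightarrow> nat \<Rightarrow> real" where
  "xbk x0 U \<mu>2 L1 L2 k = xk x0 U L1 k - (L2 - L1) / (L2 - \<mu>2) * (U / L1)"

text \<open>The piecewise quadratic f_2. On the open range (x^0, x^N), the index k with
  x^k \<le> x < x^{k+1} is computed via a floor (U < 0, so x^k is increasing).\<close>
definition hard_f2 :: "real \<Rightarrow> real \<Rightarrow> real \<Rightarrow> real \<Rightarrow> real \<Rightarrow> real \<Rightarrow> real \<Rightarrow> nat \<Rightarrow> real \<Rightarrow> real" where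
  "hard_f2 f10 f20 g10 x0 \<mu>2 L1 L2 N x =
    (let \<Delta> = f10 - f20;
         U = U_const \<Delta> \<mu>2 L1 L2 N;
         xs = xk x0 U L1;
         g2 = g2k g10 U;
         f2v = (\<lambda>k. hard_f1 L1 g10 f10 x0 (xs k) - (real N - real k) / real N * \<Delta>);
         q = (\<lambda>c k z. 1/2 * c * (z - xs k)\<^sup>2 + g2 k * (z - xs k) + f2v k)
     in if x \<le> x0 then q \<mu>2 0 x
        else if xs N \<le> x then q \<mu>2 N x
        else (let k = nat \<lfloor>(x - x0) * L1 / (- U)\<rfloor>
              in if x \<le> xbk x0 U \<mu>2 L1 L2 k then q \<mu>2 k x else q L2 (Suc k) x))"

end

theory Submission
  imports Defs
begin

(* f1 is a quadratic and f2 a C^1 piecewise quadratic whose derivative is piecewise affine, with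
   slope mu2 on [x^k, xbar^k] and slope L2 on [xbar^k, x^(k+1)], so f2 - mu2/2 x^2 and
   L2/2 x^2 - f2 have monotone derivatives and f2 lies in the class. Since f2 is differentiable,
   its only subgradient at x^k is f2'(x^k) = g2^k, and minimising f1(w) - g2^k w moves to
   x^(k+1); hence the DCA run is unique and the gradient gap at every iterate equals U. The
   constant p2 is forced by continuity of f2 at the breakpoints xbar^k: the prescribed decrease
   Delta/N of f1 - f2 per step must equal p2 U^2/2. *)

lemma lsc_if_continuous:
  fixes f :: "real \<Rightarrow> real"
  assumes "\<And>x. isCont f x"
  shows "lsc f"
  unfolding lsc_def using assms by (auto simp: isCont_def intro: order_tendstoD(1))

lemma F_classI_deriv:
  fixes f f' :: "real \<Rightarrow> real"
  assumes deriv: "\<And>x. (f has_real_derivative f' x) (at x)"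
    and lower: "mono (\<lambda>x. f' x - \<mu> * x)" and upper: "mono (\<lambda>x. L * x - f' x)"
  shows "F_class \<mu> L f"
  unfolding F_class_def
proof (intro conjI)
  show "lsc f"
    using deriv by (intro lsc_if_continuous DERIV_isCont)
  show "convex_on UNIV (\<lambda>x. f x - \<mu> / 2 * x\<^sup>2)"
    by (rule convex_on_realI[where f'="\<lambda>x. f' x - \<mu> * x"])
       (auto intro!: derivative_eq_intros deriv monoD[OF lower])
  show "convex_on UNIV (\<lambda>x. L / 2 * x\<^sup>2 - f x)"
    by (rule convex_on_realI[where f'="\<lambda>x. L * x - f' x"])
       (auto intro!: derivative_eq_intros deriv monoD[OF upper])
qed

lemma convex_if_F_class:
  assumes "F_class \<mu> L f" "0 \<le> \<mu>"
  shows "convex_on UNIV f"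
proof -
  have "convex_on UNIV (\<lambda>x. \<mu> / 2 * x\<^sup>2)"
    using assms(2) by (intro convex_on_cmul convex_power_even) auto
  then have "convex_on UNIV (\<lambda>x. (f x - \<mu> / 2 * x\<^sup>2) + \<mu> / 2 * x\<^sup>2)"
    using assms(1) unfolding F_class_def by (intro convex_on_add) auto
  then show ?thesis by simp
qed

lemma subdiff_eq_deriv:
  fixes f :: "real \<Rightarrow> real"
  assumes convex: "convex_on UNIV f" and deriv: "(f has_real_derivative D) (at x)"
  shows "subdiff f x = {D}"
proof (intro equalityI subsetI)
  fix g assume "g \<in> subdiff f x"
  then have "\<forall>w. \<bar>x - w\<bar> < 1 \<longrightarrow> f x - g * x \<le> f w - g * w"
    by (auto simp: subdiff_def algebra_simps)
  moreover have "((\<lambda>w. f w - g * w) has_real_derivative D - g) (at x)"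
    by (auto intro!: derivative_eq_intros deriv)
  ultimately have "D - g = 0"
    using DERIV_local_min[OF _ zero_less_one] by blast
  then show "g \<in> {D}" by simp
next
  fix g assume "g \<in> {D}"
  have "f w - f x \<ge> D * (w - x)" for w
    by (rule convex_on_imp_above_tangent[OF convex connected_UNIV]) (use deriv in auto)
  then show "g \<in> subdiff f x"
    using \<open>g \<in> {D}\<close> by (auto simp: subdiff_def algebra_simps)
qed

lemma has_real_derivative_glue:
  fixes f p r :: "real \<Rightarrow> real"
  assumes "a < x" "x < b"
    and left: "\<And>y. a \<le> y \<Longrightarrow> y \<le> x \<Longrightarrow> f y = p y"
    and right: "\<And>y. x \<le> y \<Longrightarrow> y \<le> b \<Longrightarrow> f y = r y"
    and "(p has_real_derivative D) (at x)" "(r has_real_derivative D) (at x)"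
  shows "(f has_real_derivative D) (at x)"
proof -
  have "((\<lambda>y. (p y - p x) / (y - x)) \<longlongrightarrow> D) (at_left x)"
    using has_field_derivative_at_within[OF assms(5)] unfolding has_field_derivative_iff .
  moreover have "\<forall>\<^sub>F y in at_left x. (p y - p x) / (y - x) = (f y - f x) / (y - x)"
    using eventually_at_left_real[OF \<open>a < x\<close>] by eventually_elim (use assms(1) left in auto)
  ultimately have "((\<lambda>y. (f y - f x) / (y - x)) \<longlongrightarrow> D) (at_left x)"
    by (rule Lim_transform_eventually)
  moreover have "((\<lambda>y. (r y - r x) / (y - x)) \<longlongrightarrow> D) (at_right x)"
    using has_field_derivative_at_within[OF assms(6)] unfolding has_field_derivative_iff .
  moreover have "\<forall>\<^sub>F y in at_right x. (r y - r x) / (y - x) = (f y - f x) / (y - x)"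
    using eventually_at_right_real[OF \<open>x < b\<close>] by eventually_elim (use assms(2) right in auto)
  ultimately have "((\<lambda>y. (f y - f x) / (y - x)) \<longlongrightarrow> D) (at x)"
    by (auto simp: filterlim_at_split intro: Lim_transform_eventually)
  then show ?thesis
    unfolding has_field_derivative_iff .
qed

lemma mono_on_affine:
  fixes f :: "real \<Rightarrow> real"
  assumes "0 \<le> c" "\<And>y. y \<in> S \<Longrightarrow> f y = c * y + d"
  shows "mono_on S f"
  by (rule mono_onI) (use assms mult_left_mono in auto)

lemma mono_on_Un_adjacent:
  fixes H :: "real \<Rightarrow> real"
  assumes "mono_on A H" "mono_on B H" "c \<in> A" "c \<in> B" "\<forall>x\<in>A. x \<le> c" "\<forall>y\<in>B. c \<le> y"
  shows "mono_on (A \<union> B) H"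
proof (rule mono_onI)
  fix x y assume xy: "x \<in> A \<union> B" "y \<in> A \<union> B" "x \<le> y"
  have "x = c \<and> y = c" if "x \<in> B" "y \<in> A"
    using that xy(3) assms(5,6) by force
  then consider "x \<in> A" "y \<in> A" | "x \<in> B" "y \<in> B" | "x \<in> A" "y \<in> B"
    using xy(1,2) assms(3) by blast
  then show "H x \<le> H y"
  proof cases
    case 3
    then have "H x \<le> H c" "H c \<le> H y" using assms by (auto intro: mono_onD)
    then show ?thesis by simp
  qed (use xy assms(1,2) in \<open>auto dest: mono_onD\<close>)
qed

lemma mono_if_mono_on_grid:
  fixes H :: "real \<Rightarrow> real" and a u :: real and N :: nat
  assumes u: "0 < u"
    and left: "mono_on {..a} H" and right: "mono_on {a + real N * u..} H"
    and cells: "\<And>k. k < N \<Longrightarrow> mono_on {a + real k * u .. a + real (Suc k) * u} H"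
  shows "mono H"
proof -
  have "n \<le> N \<Longrightarrow> mono_on {..a + real n * u} H" for n
  proof (induction n)
    case 0
    then show ?case using left by simp
  next
    case (Suc n)
    have "mono_on ({..a + real n * u} \<union> {a + real n * u .. a + real (Suc n) * u}) H"
      by (rule mono_on_Un_adjacent[where c="a + real n * u"]) (use Suc cells u in auto)
    moreover have "{..a + real n * u} \<union> {a + real n * u .. a + real (Suc n) * u} = {..a + real (Suc n) * u}"
      using u by (auto simp: distrib_right)
    ultimately show ?case by simp
  qed
  then have "mono_on ({..a + real N * u} \<union> {a + real N * u..}) H"
    by (intro mono_on_Un_adjacent[where c="a + real N * u"] right) auto
  moreover have "{..a + real N * u} \<union> {a + real N * u..} = UNIV" by auto
  ultimately show ?thesis by simp
qed

lemma nat_floor_grid_index: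
  fixes a u x :: real
  assumes "0 < u" "a + real k * u \<le> x" "x < a + real (Suc k) * u"
  shows "nat \<lfloor>(x - a) / u\<rfloor> = k"
proof -
  have "real k \<le> (x - a) / u" "(x - a) / u < real k + 1"
    using assms by (simp_all add: field_simps)
  then have "\<lfloor>(x - a) / u\<rfloor> = int k" by (simp add: floor_eq_iff)
  then show ?thesis by simp
qed

lemma grid_cell_right_open:
  fixes a u x :: real
  assumes "0 < u" "a \<le> x" "x < a + real N * u"
  obtains k where "k < N" "a + real k * u \<le> x" "x < a + real (Suc k) * u"
proof -
  define k where "k = nat \<lfloor>(x - a) / u\<rfloor>"
  have "0 \<le> (x - a) / u" using assms by simp
  then have k: "real k \<le> (x - a) / u" "(x - a) / u < real k + 1"
    unfolding k_def by linarith+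
  then have "a + real k * u \<le> x" "x < a + real (Suc k) * u"
    using assms(1) by (simp_all add: field_simps)
  moreover have "(x - a) / u < real N" using assms by (simp add: field_simps)
  then have "k < N" using k by linarith
  ultimately show ?thesis using that by blast
qed

lemma grid_cell_left_open:
  fixes a u x :: real
  assumes "0 < u" "a < x" "x \<le> a + real N * u"
  obtains k where "k < N" "a + real k * u < x" "x \<le> a + real (Suc k) * u"
proof -
  define k where "k = nat \<lceil>(x - a) / u\<rceil> - 1"
  have "0 < (x - a) / u" using assms by simp
  then have k: "real k < (x - a) / u" "(x - a) / u \<le> real k + 1"
    unfolding k_def by linarith+
  then have "a + real k * u < x" "x \<le> a + real (Suc k) * u"
    using assms(1) by (simp_all add: field_simps)
  moreover have "(x - a) / u \<le> real N" using assms by (simp add: field_simps)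
  then have "k < N" using k by linarith
  ultimately show ?thesis using that by blast
qed

definition quad :: "real \<Rightarrow> real \<Rightarrow> real \<Rightarrow> real \<Rightarrow> real \<Rightarrow> real" where
  "quad c a g f z = 1/2 * c * (z - a)\<^sup>2 + g * (z - a) + f"

lemma quad_deriv: "(quad c a g f has_real_derivative c * (z - a) + g) (at z)"
  unfolding quad_def by (auto intro!: derivative_eq_intros simp: power2_eq_square algebra_simps)

lemma quad_F_class:
  assumes "\<mu> \<le> c" "c \<le> L"
  shows "F_class \<mu> L (quad c a g f)"
proof (rule F_classI_deriv[OF quad_deriv])
  show "mono (\<lambda>x. c * (x - a) + g - \<mu> * x)"
    by (rule mono_on_affine[where c="c - \<mu>" and d="g - c * a"]) (use assms in \<open>auto simp: algebra_simps\<close>)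
  show "mono (\<lambda>x. L * x - (c * (x - a) + g))"
    by (rule mono_on_affine[where c="L - c" and d="c * a - g"]) (use assms in \<open>auto simp: algebra_simps\<close>)
qed

lemma quad_minus_linear_argmin_iff:
  assumes c: "0 < c"
  shows "(\<forall>w. quad c a g f x - h * x \<le> quad c a g f w - h * w) \<longleftrightarrow> x = a + (h - g) / c"
proof -
  define m where "m = a + (h - g) / c"
  define K where "K = f - h * a - (h - g)\<^sup>2 / (2 * c)"
  have completed_square: "quad c a g f w - h * w = c / 2 * (w - m)\<^sup>2 + K" for w
    unfolding quad_def m_def K_def using c by (simp add: field_simps power2_eq_square)
  have "(\<forall>w. c / 2 * (x - m)\<^sup>2 \<le> c / 2 * (w - m)\<^sup>2) \<longleftrightarrow> x = m"
  proof
    assume "\<forall>w. c / 2 * (x - m)\<^sup>2 \<le> c / 2 * (w - m)\<^sup>2"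
    then have "c / 2 * (x - m)\<^sup>2 \<le> 0" by (metis diff_self power_zero_numeral mult_zero_right)
    then show "x = m" using c by (simp add: mult_le_0_iff)
  qed (use c in simp)
  then show ?thesis unfolding completed_square m_def by simp
qed

lemma hard_f1_eq_quad: "hard_f1 L1 g10 f10 x0 = quad L1 x0 g10 f10"
  by (simp add: hard_f1_def quad_def fun_eq_iff)

locale dca_hard_instance =
  fixes f10 f20 g10 x0 \<mu>2 L1 L2 :: real and N :: nat
  assumes gap_pos: "0 < f10 - f20" and N_pos: "1 \<le> N" and mu2_nonneg: "0 \<le> \<mu>2"
    and mu2_less: "\<mu>2 < L1" and L1_less: "L1 < L2"
begin

definition p2 :: real where "p2 = p2_const \<mu>2 L1 L2"
definition U :: real where "U = U_const (f10 - f20) \<mu>2 L1 L2 N"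
definition u :: real where "u = - U / L1"
definition t :: real where "t = (L2 - L1) / (L2 - \<mu>2)"
definition xs :: "nat \<Rightarrow> real" where "xs = xk x0 U L1"
definition xb :: "nat \<Rightarrow> real" where "xb = xbk x0 U \<mu>2 L1 L2"
definition g2 :: "nat \<Rightarrow> real" where "g2 = g2k g10 U"
definition f2v :: "nat \<Rightarrow> real" where
  "f2v k = hard_f1 L1 g10 f10 x0 (xs k) - (real N - real k) / real N * (f10 - f20)"
definition q :: "real \<Rightarrow> nat \<Rightarrow> real \<Rightarrow> real" where "q c k = quad c (xs k) (g2 k) (f2v k)"
definition qd :: "real \<Rightarrow> nat \<Rightarrow> real \<Rightarrow> real" where "qd c k z = c * (z - xs k) + g2 k"

(* The case split of hard_f2 with the pieces left abstract, so that the same lemmas describe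
   f2 (pieces q) and its derivative (pieces qd). *)
definition pw :: "(nat \<Rightarrow> real \<Rightarrow> real) \<Rightarrow> (nat \<Rightarrow> real \<Rightarrow> real) \<Rightarrow> real \<Rightarrow> real" where
  "pw A B x = (if x \<le> x0 then A 0 x else if xs N \<le> x then A N x
        else (let k = nat \<lfloor>(x - x0) * L1 / (- U)\<rfloor>
              in if x \<le> xb k then A k x else B (Suc k) x))"

abbreviation F2 :: "real \<Rightarrow> real" where "F2 \<equiv> pw (q \<mu>2) (q L2)"
definition D2 :: "real \<Rightarrow> real" where "D2 = pw (qd \<mu>2) (qd L2)"

lemma hard_f2_eq_pw: "hard_f2 f10 f20 g10 x0 \<mu>2 L1 L2 N = F2"
  by (intro ext)
     (simp only: hard_f2_def pw_def q_def quad_def f2v_def xs_def g2_def xb_def U_def Let_def)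

lemma L1_pos: "0 < L1"
  using mu2_nonneg mu2_less by linarith

lemma t_bounds: "0 < t" "t < 1"
  using mu2_nonneg mu2_less L1_less by (auto simp: t_def field_simps)

lemma t_balance: "t * (L2 - \<mu>2) = L2 - L1"
  using mu2_less L1_less by (simp add: t_def)

lemma p2_eq: "p2 = (2 * L1 - L1 * t + \<mu>2 * t) / L1\<^sup>2"
proof (cases "\<mu>2 = 0")
  case True
  show ?thesis
    unfolding p2_def p2_const_def t_def
    using True L1_pos L1_less by (simp add: field_simps power2_eq_square)
next
  case False
  then have "0 < \<mu>2" using mu2_nonneg by simp
  then have ratio: "(1 / L1 - 1 / L2) / (1 / \<mu>2 - 1 / L2) = \<mu>2 * t / L1"
    and fraction: "(L1 - \<mu>2) / (L2 - \<mu>2) = 1 - t"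
    using L1_pos mu2_less L1_less by (simp_all add: t_def field_simps)
  have "p2 = 1 / L1 * (1 + \<mu>2 * t / L1) + 1 / L1 * (1 - t)"
    unfolding p2_def p2_const_def ratio fraction using False by simp
  also have "\<dots> = (2 * L1 - L1 * t + \<mu>2 * t) / L1\<^sup>2"
    using L1_pos by (simp add: field_simps power2_eq_square)
  finally show ?thesis .
qed

lemma p2_pos: "0 < p2"
proof -
  have "L1 * t < L1" "0 \<le> \<mu>2 * t"
    using t_bounds L1_pos mu2_nonneg by simp_all
  then have "0 < 2 * L1 - L1 * t + \<mu>2 * t"
    using L1_pos by linarith
  then show ?thesis
    unfolding p2_eq using L1_pos by simp
qed

lemma U_neg: "U < 0"
  using gap_pos p2_pos N_pos by (simp add: U_def U_const_def p2_def[symmetric])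

lemma U_sq: "U\<^sup>2 = 2 * (f10 - f20) / (p2 * real N)"
  using gap_pos p2_pos N_pos by (simp add: U_def U_const_def p2_def[symmetric])

lemma u_pos: "0 < u"
  using U_neg L1_pos by (simp add: u_def divide_neg_pos)

lemma U_eq: "U = - L1 * u"
  using L1_pos by (simp add: u_def)

lemma xs_eq: "xs k = x0 + real k * u"
  using L1_pos by (simp add: xs_def xk_def u_def)

lemma xb_eq: "xb k = xs k + t * u"
  using L1_pos by (simp add: xb_def xbk_def xs_def t_def u_def)

lemma g2_eq: "g2 k = g10 + (real k + 1) * L1 * u"
  by (simp add: g2_def g2k_def U_eq)

lemma step_decrease_eq: "(f10 - f20) / real N = (2 * L1 - L1 * t + \<mu>2 * t) * u\<^sup>2 / 2"
proof -
  have "2 * (f10 - f20) / (p2 * real N) = L1\<^sup>2 * u\<^sup>2"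
    using U_sq by (simp add: U_eq power_mult_distrib)
  then have "(f10 - f20) / real N = p2 * L1\<^sup>2 * u\<^sup>2 / 2"
    using p2_pos N_pos by (simp add: field_simps)
  then show ?thesis
    using L1_pos by (simp add: p2_eq)
qed

lemma f2v_eq: "f2v k = L1 / 2 * (real k * u)\<^sup>2 + g10 * (real k * u) + f20 + real k * ((f10 - f20) / real N)"
  using N_pos by (simp add: f2v_def hard_f1_def xs_eq field_simps)

lemma xs_less_iff [simp]: "xs j < xs k \<longleftrightarrow> j < k"
  using u_pos by (simp add: xs_eq)

lemma xs_le_iff [simp]: "xs j \<le> xs k \<longleftrightarrow> j \<le> k"
  using u_pos by (simp add: xs_eq)

lemma xs_0 [simp]: "xs 0 = x0"
  by (simp add: xs_eq)

lemma xb_between: "xs k < xb k" "xb k < xs (Suc k)"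
  using t_bounds u_pos by (auto simp: xb_eq xs_eq distrib_right)

lemma qd_continuous_at_xb: "qd \<mu>2 k (xb k) = qd L2 (Suc k) (xb k)"
proof -
  have "qd L2 (Suc k) (xb k) - qd \<mu>2 k (xb k) = u * (L1 - L2 + t * (L2 - \<mu>2))"
    by (simp add: qd_def xb_eq xs_eq g2_eq algebra_simps)
  then show ?thesis by (simp add: t_balance)
qed

lemma q_continuous_at_xb: "q \<mu>2 k (xb k) = q L2 (Suc k) (xb k)"
proof -
  have "q L2 (Suc k) (xb k) - q \<mu>2 k (xb k) = u\<^sup>2 * (1 - t) / 2 * (L2 - t * (L2 - \<mu>2) - L1)"
    unfolding q_def quad_def xb_eq f2v_eq step_decrease_eq
    by (simp add: xs_eq g2_eq field_simps power2_eq_square)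
  then show ?thesis by (simp add: t_balance)
qed

lemma grid_index:
  assumes "xs k \<le> x" "x < xs (Suc k)"
  shows "nat \<lfloor>(x - x0) * L1 / (- U)\<rfloor> = k"
proof -
  have "(x - x0) * L1 / (- U) = (x - x0) / u"
    using L1_pos U_neg by (simp add: u_def field_simps)
  then show ?thesis
    using nat_floor_grid_index[OF u_pos] assms by (simp add: xs_eq)
qed

lemma pw_left: "x \<le> x0 \<Longrightarrow> pw A B x = A 0 x"
  by (simp add: pw_def)

lemma pw_right: "xs N \<le> x \<Longrightarrow> pw A B x = A N x"
  using N_pos xs_less_iff[of 0 N] by (simp add: pw_def)

lemma pw_mu_segment:
  assumes "k < N" "xs k \<le> y" "y \<le> xb k"
  shows "pw A B y = A k y"
proof (cases "y \<le> x0")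
  case True
  then have "k = 0"
    using assms(2) xs_le_iff[of k 0] by simp
  then show ?thesis using True by (simp add: pw_left)
next
  case False
  have "y < xs (Suc k)" using assms(3) xb_between(2)[of k] by simp
  moreover have "xs (Suc k) \<le> xs N" using assms(1) by simp
  ultimately have "y < xs N" by linarith
  then show ?thesis
    using False assms grid_index[OF assms(2) \<open>y < xs (Suc k)\<close>] by (simp add: pw_def)
qed

lemma pw_L_segment:
  assumes knots: "\<And>j. A j (xs j) = B j (xs j)" and breakpoint: "A k (xb k) = B (Suc k) (xb k)"
    and "k < N" "xb k \<le> y" "y \<le> xs (Suc k)"
  shows "pw A B y = B (Suc k) y"
proof (cases "y = xs (Suc k)")
  case True
  show ?thesis
  proof (cases "Suc k = N")
    case True
    then show ?thesis using \<open>y = xs (Suc k)\<close> knots by (simp add: pw_right)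
  next
    case False
    then have "pw A B y = A (Suc k) y"
      using \<open>k < N\<close> \<open>y = xs (Suc k)\<close> xb_between(1)[of "Suc k"] by (intro pw_mu_segment) auto
    then show ?thesis using \<open>y = xs (Suc k)\<close> knots by simp
  qed
next
  case False
  then have y_less: "y < xs (Suc k)" using assms(5) by simp
  moreover have "xs (Suc k) \<le> xs N" using \<open>k < N\<close> by simp
  ultimately have "y < xs N" by linarith
  moreover have "x0 < y" "xs k \<le> y"
    using assms(4) xb_between(1)[of k] xs_le_iff[of 0 k] by auto
  ultimately have "pw A B y = (if y \<le> xb k then A k y else B (Suc k) y)"
    using grid_index[OF \<open>xs k \<le> y\<close> y_less] by (simp add: pw_def)
  then show ?thesis using breakpoint assms(4) by auto
qed

lemma q_at_xs: "q c k (xs k) = f2v k"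
  by (simp add: q_def quad_def)

lemma qd_at_xs: "qd c k (xs k) = g2 k"
  by (simp add: qd_def)

lemma q_deriv: "(q c k has_real_derivative qd c k z) (at z)"
  unfolding q_def qd_def by (rule quad_deriv)

lemma F2_mu_segment: "k < N \<Longrightarrow> xs k \<le> y \<Longrightarrow> y \<le> xb k \<Longrightarrow> F2 y = q \<mu>2 k y"
  by (rule pw_mu_segment)

lemma D2_mu_segment: "k < N \<Longrightarrow> xs k \<le> y \<Longrightarrow> y \<le> xb k \<Longrightarrow> D2 y = qd \<mu>2 k y"
  unfolding D2_def by (rule pw_mu_segment)

lemma F2_L_segment: "k < N \<Longrightarrow> xb k \<le> y \<Longrightarrow> y \<le> xs (Suc k) \<Longrightarrow> F2 y = q L2 (Suc k) y"
  by (rule pw_L_segment) (simp_all add: q_at_xs q_continuous_at_xb)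

lemma D2_L_segment: "k < N \<Longrightarrow> xb k \<le> y \<Longrightarrow> y \<le> xs (Suc k) \<Longrightarrow> D2 y = qd L2 (Suc k) y"
  unfolding D2_def by (rule pw_L_segment) (simp_all add: qd_at_xs qd_continuous_at_xb)

lemma xs_cell_right_open:
  assumes "x0 \<le> x" "x < xs N"
  obtains k where "k < N" "xs k \<le> x" "x < xs (Suc k)"
proof -
  from assms obtain k where "k < N" "x0 + real k * u \<le> x" "x < x0 + real (Suc k) * u"
    by (auto simp: xs_eq elim: grid_cell_right_open[OF u_pos])
  then show ?thesis using that by (simp add: xs_eq)
qed

lemma xs_cell_left_open:
  assumes "x0 < x" "x \<le> xs N"
  obtains k where "k < N" "xs k < x" "x \<le> xs (Suc k)"
proof -
  from assms obtain k where "k < N" "x0 + real k * u < x" "x \<le> x0 + real (Suc k) * u"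
    by (auto simp: xs_eq elim: grid_cell_left_open[OF u_pos])
  then show ?thesis using that by (simp add: xs_eq)
qed

lemma F2_right_piece:
  obtains b c k where "x < b" "\<And>y. x \<le> y \<Longrightarrow> y \<le> b \<Longrightarrow> F2 y = q c k y" "qd c k x = D2 x"
proof -
  consider "x < x0" | "xs N \<le> x" | k where "k < N" "xs k \<le> x" "x < xs (Suc k)"
    by (metis xs_cell_right_open not_le)
  then show ?thesis
  proof cases
    case 1
    show ?thesis
      by (rule that[of x0 \<mu>2 0]) (use 1 in \<open>simp_all add: D2_def pw_left\<close>)
  next
    case 2
    show ?thesis
      by (rule that[of "x + 1" \<mu>2 N]) (use 2 in \<open>simp_all add: D2_def pw_right\<close>)
  next
    case (3 k)
    show ?thesis
    proof (cases "x < xb k")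
      case True
      show ?thesis
        by (rule that[of "xb k" \<mu>2 k]) (use 3 True in \<open>simp_all add: F2_mu_segment D2_mu_segment\<close>)
    next
      case False
      show ?thesis
        by (rule that[of "xs (Suc k)" L2 "Suc k"])
           (use 3 False in \<open>simp_all add: F2_L_segment D2_L_segment\<close>)
    qed
  qed
qed

lemma F2_left_piece:
  obtains a c k where "a < x" "\<And>y. a \<le> y \<Longrightarrow> y \<le> x \<Longrightarrow> F2 y = q c k y" "qd c k x = D2 x"
proof -
  consider "x \<le> x0" | "xs N < x" | k where "k < N" "xs k < x" "x \<le> xs (Suc k)"
    by (metis xs_cell_left_open not_le)
  then show ?thesis
  proof cases
    case 1
    show ?thesis
      by (rule that[of "x - 1" \<mu>2 0]) (use 1 in \<open>simp_all add: D2_def pw_left\<close>)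
  next
    case 2
    show ?thesis
      by (rule that[of "xs N" \<mu>2 N]) (use 2 in \<open>simp_all add: D2_def pw_right\<close>)
  next
    case (3 k)
    show ?thesis
    proof (cases "x \<le> xb k")
      case True
      show ?thesis
        by (rule that[of "xs k" \<mu>2 k]) (use 3 True in \<open>simp_all add: F2_mu_segment D2_mu_segment\<close>)
    next
      case False
      show ?thesis
        by (rule that[of "xb k" L2 "Suc k"]) (use 3 False in \<open>simp_all add: F2_L_segment D2_L_segment\<close>)
    qed
  qed
qed

lemma F2_has_deriv: "(F2 has_real_derivative D2 x) (at x)"
proof -
  obtain a c k where "a < x" and left: "\<And>y. a \<le> y \<Longrightarrow> y \<le> x \<Longrightarrow> F2 y = q c k y"
    and "qd c k x = D2 x"
    using F2_left_piece[of x] by blast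
  then have left_deriv: "(q c k has_real_derivative D2 x) (at x)"
    using q_deriv by metis
  obtain b c' k' where "x < b" and right: "\<And>y. x \<le> y \<Longrightarrow> y \<le> b \<Longrightarrow> F2 y = q c' k' y"
    and "qd c' k' x = D2 x"
    using F2_right_piece[of x] by blast
  then have right_deriv: "(q c' k' has_real_derivative D2 x) (at x)"
    using q_deriv by metis
  show ?thesis
    by (rule has_real_derivative_glue[OF \<open>a < x\<close> \<open>x < b\<close> left right left_deriv right_deriv])
qed

lemma mono_if_mono_on_segments:
  fixes H :: "real \<Rightarrow> real"
  assumes "mono_on {..x0} H" "mono_on {xs N..} H"
    and "\<And>k. k < N \<Longrightarrow> mono_on {xs k .. xb k} H"
    and "\<And>k. k < N \<Longrightarrow> mono_on {xb k .. xs (Suc k)} H"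
  shows "mono H"
proof (rule mono_if_mono_on_grid[OF u_pos, where a=x0 and N=N])
  show "mono_on {..x0} H" by fact
  show "mono_on {x0 + real N * u..} H" using assms(2) by (simp add: xs_eq)
  fix k assume "k < N"
  have "mono_on ({xs k .. xb k} \<union> {xb k .. xs (Suc k)}) H"
    by (rule mono_on_Un_adjacent[where c="xb k"]) (use assms(3,4) \<open>k < N\<close> xb_between[of k] in auto)
  moreover have "{xs k .. xb k} \<union> {xb k .. xs (Suc k)} = {x0 + real k * u .. x0 + real (Suc k) * u}"
    using xb_between[of k] by (auto simp: xs_eq)
  ultimately show "mono_on {x0 + real k * u .. x0 + real (Suc k) * u} H" by simp
qed

lemma D2_minus_mu2_mono: "mono (\<lambda>y. D2 y - \<mu>2 * y)"
proof (rule mono_if_mono_on_segments)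
  show "mono_on {..x0} (\<lambda>y. D2 y - \<mu>2 * y)"
    by (rule mono_on_affine[where c=0 and d="g2 0 - \<mu>2 * x0"])
       (auto simp: D2_def pw_left qd_def algebra_simps)
  show "mono_on {xs N..} (\<lambda>y. D2 y - \<mu>2 * y)"
    by (rule mono_on_affine[where c=0 and d="g2 N - \<mu>2 * xs N"])
       (auto simp: D2_def pw_right qd_def algebra_simps)
  fix k assume "k < N"
  show "mono_on {xs k .. xb k} (\<lambda>y. D2 y - \<mu>2 * y)"
    by (rule mono_on_affine[where c=0 and d="g2 k - \<mu>2 * xs k"])
       (use \<open>k < N\<close> in \<open>auto simp: D2_mu_segment qd_def algebra_simps\<close>)
  show "mono_on {xb k .. xs (Suc k)} (\<lambda>y. D2 y - \<mu>2 * y)"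
    by (rule mono_on_affine[where c="L2 - \<mu>2" and d="g2 (Suc k) - L2 * xs (Suc k)"])
       (use \<open>k < N\<close> mu2_less L1_less in \<open>auto simp: D2_L_segment qd_def algebra_simps\<close>)
qed

lemma L2_minus_D2_mono: "mono (\<lambda>y. L2 * y - D2 y)"
proof (rule mono_if_mono_on_segments)
  show "mono_on {..x0} (\<lambda>y. L2 * y - D2 y)"
    by (rule mono_on_affine[where c="L2 - \<mu>2" and d="\<mu>2 * x0 - g2 0"])
       (use mu2_less L1_less in \<open>auto simp: D2_def pw_left qd_def algebra_simps\<close>)
  show "mono_on {xs N..} (\<lambda>y. L2 * y - D2 y)"
    by (rule mono_on_affine[where c="L2 - \<mu>2" and d="\<mu>2 * xs N - g2 N"])
       (use mu2_less L1_less in \<open>auto simp: D2_def pw_right qd_def algebra_simps\<close>)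
  fix k assume "k < N"
  show "mono_on {xs k .. xb k} (\<lambda>y. L2 * y - D2 y)"
    by (rule mono_on_affine[where c="L2 - \<mu>2" and d="\<mu>2 * xs k - g2 k"])
       (use \<open>k < N\<close> mu2_less L1_less in \<open>auto simp: D2_mu_segment qd_def algebra_simps\<close>)
  show "mono_on {xb k .. xs (Suc k)} (\<lambda>y. L2 * y - D2 y)"
    by (rule mono_on_affine[where c=0 and d="L2 * xs (Suc k) - g2 (Suc k)"])
       (use \<open>k < N\<close> in \<open>auto simp: D2_L_segment qd_def algebra_simps\<close>)
qed

lemma F2_F_class: "F_class \<mu>2 L2 F2"
  by (rule F_classI_deriv[OF F2_has_deriv D2_minus_mu2_mono L2_minus_D2_mono])

lemma D2_at_xs: "k \<le> N \<Longrightarrow> D2 (xs k) = g2 k"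
  using D2_mu_segment[of k "xs k"] xb_between(1)[of k]
  by (cases "k = N") (auto simp: D2_def pw_right qd_at_xs)

lemma subdiff_F2_at_xs: "k \<le> N \<Longrightarrow> subdiff F2 (xs k) = {g2 k}"
  using subdiff_eq_deriv[OF convex_if_F_class[OF F2_F_class mu2_nonneg] F2_has_deriv] D2_at_xs
  by simp

lemma dca_step_at_xs_iff:
  assumes "k \<le> N"
  shows "dca_step (hard_f1 L1 g10 f10 x0) F2 (xs k) x \<longleftrightarrow> x = xs (Suc k)"
proof -
  have "xs (Suc k) = x0 + (g2 k - g10) / L1"
    using L1_pos by (simp add: xs_eq g2_eq)
  then show ?thesis
    unfolding dca_step_def subdiff_F2_at_xs[OF assms] hard_f1_eq_quad
    by (simp add: quad_minus_linear_argmin_iff[OF L1_pos])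
qed

lemma dca_run_xs: "dca_run (hard_f1 L1 g10 f10 x0) F2 x0 N xs"
  by (simp add: dca_run_def dca_step_at_xs_iff)

lemma dca_run_unique:
  assumes "dca_run (hard_f1 L1 g10 f10 x0) F2 x0 N y"
  shows "k \<le> N \<Longrightarrow> y k = xs k"
proof (induction k)
  case 0
  then show ?case using assms by (simp add: dca_run_def)
next
  case (Suc k)
  have "dca_step (hard_f1 L1 g10 f10 x0) F2 (y k) (y (Suc k))"
    using assms Suc.prems by (simp add: dca_run_def)
  then show ?case
    using Suc by (simp add: dca_step_at_xs_iff)
qed

lemma gradient_gap_at_xs:
  assumes "k \<le> N"
  shows "deriv (hard_f1 L1 g10 f10 x0) (xs k) - deriv F2 (xs k) = U"
proof -
  have "deriv (hard_f1 L1 g10 f10 x0) (xs k) = L1 * (xs k - x0) + g10"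
    unfolding hard_f1_eq_quad by (rule DERIV_imp_deriv[OF quad_deriv])
  moreover have "deriv F2 (xs k) = g2 k"
    using DERIV_imp_deriv[OF F2_has_deriv] D2_at_xs[OF assms] by simp
  ultimately show ?thesis
    by (simp add: xs_eq g2_eq U_eq algebra_simps)
qed

lemma min_gradient_gap:
  assumes "dca_run (hard_f1 L1 g10 f10 x0) F2 x0 N y"
  shows "1/2 * (MIN k\<in>{0..N}. (deriv (hard_f1 L1 g10 f10 x0) (y k) - deriv F2 (y k))\<^sup>2)
    = (f10 - f20) / (p2_const \<mu>2 L1 L2 * real N)"
proof -
  have "(\<lambda>k. (deriv (hard_f1 L1 g10 f10 x0) (y k) - deriv F2 (y k))\<^sup>2) ` {0..N} = {U\<^sup>2}"
    using dca_run_unique[OF assms] gradient_gap_at_xs by force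
  then have "(MIN k\<in>{0..N}. (deriv (hard_f1 L1 g10 f10 x0) (y k) - deriv F2 (y k))\<^sup>2) = U\<^sup>2"
    by simp
  then show ?thesis
    unfolding p2_def[symmetric] by (simp add: U_sq divide_simps)
qed

end

theorem proposition6:
  fixes f10 f20 g10 x0 \<mu>1 \<mu>2 L1 L2 :: real and N :: nat
  assumes "f10 - f20 > 0"
    and "N \<ge> 1"
    and "\<mu>1 \<ge> 0" and "\<mu>2 \<ge> 0"
    and "max \<mu>1 \<mu>2 < L1" and "L1 < L2"
  shows "F_class \<mu>1 L1 (hard_f1 L1 g10 f10 x0)
    \<and> F_class \<mu>2 L2 (hard_f2 f10 f20 g10 x0 \<mu>2 L1 L2 N)
    \<and> (\<exists>y. dca_run (hard_f1 L1 g10 f10 x0) (hard_f2 f10 f20 g10 x0 \<mu>2 L1 L2 N) x0 N y)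
    \<and> (\<forall>y. dca_run (hard_f1 L1 g10 f10 x0) (hard_f2 f10 f20 g10 x0 \<mu>2 L1 L2 N) x0 N y \<longrightarrow>
          1/2 * (MIN k\<in>{0..N}. (deriv (hard_f1 L1 g10 f10 x0) (y k)
                                 - deriv (hard_f2 f10 f20 g10 x0 \<mu>2 L1 L2 N) (y k))\<^sup>2)
          = (f10 - f20) / (p2_const \<mu>2 L1 L2 * real N))"
proof -
  interpret dca_hard_instance f10 f20 g10 x0 \<mu>2 L1 L2 N
    by unfold_locales (use assms in auto)
  have "F_class \<mu>1 L1 (hard_f1 L1 g10 f10 x0)"
    unfolding hard_f1_eq_quad using assms(5) by (intro quad_F_class) auto
  then show ?thesis
    unfolding hard_f2_eq_pw using F2_F_class dca_run_xs min_gradient_gap by blast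
qed

end
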